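(* Let $m,n\geq 0$ be integers, and let $U=e^{2\pi i\alpha}$, $V=e^{2\pi i\beta}$ with $0\leq \alpha,\beta<1$ and $\alpha\neq\beta$. Then \[ \frac{2}{(2\pi i)^{m+n+1}}\int_0^1 \frac{dr}{r}\int_0^1 d\phi\, \Big(\operatorname{Li}_m(re^{2\pi i\phi}\bar V)-(-1)^m\,\overline{\operatorname{Li}_m(re^{2\pi i\phi}\bar V)}\Big)\Big(\operatorname{Li}_n(re^{2\pi i\phi}\bar U)+(-1)^n\,\overline{\operatorname{Li}_n(re^{2\pi i\phi}\bar U)}\Big) = -\frac{(-1)^n}{(m+n+1)!}\,B_{m+n+1}\big(\alpha-\beta+H(\beta-\alpha)\big), \] where the integral over $r$ is understood as $\lim_{\lambda\uparrow 1}\int_0^\lambda$. In particular, on each of the regions $\{\alpha<\beta\}$ and $\{\alpha>\beta\}$ this quantity is a polynomial in $\alpha,\beta$ with rational coefficients.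
   Context: For an integer $k\geq 0$, $\operatorname{Li}_k(x)=\sum_{j\geq 1} x^j/j^k$ is the polylogarithm, defined by this series for $|x|<1$ (in the integrand, $|re^{2\pi i\phi}\bar U|=|re^{2\pi i\phi}\bar V|=r<1$). The bar denotes complex conjugation. $B_k$ denotes the $k$-th Bernoulli polynomial (defined by $B_0=1$, $B_k'=kB_{k-1}$, $\int_0^1 B_k=0$ for $k\geq1$). $H$ is the Heaviside function: $H(x)=0$ for $x\leq 0$ and $H(x)=1$ for $x>0$. *)

theory Defs
  imports "HOL-Analysis.Analysis"
begin

text \<open>Polylogarithm Li_k(x) = sum_{j>=1} x^j / j^k (meaningful for |x| < 1).\<close>
definition polylog :: "nat \<Rightarrow> complex \<Rightarrow> complex" where
  "polylog k x = (\<Sum>j. x ^ Suc j / of_nat (Suc j) ^ k)"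

fun bernpoly :: "nat \<Rightarrow> real \<Rightarrow> real" where
  "bernpoly 0 = (\<lambda>x. 1)"
| "bernpoly (Suc k) =
     (THE f. (\<forall>x. (f has_real_derivative (of_nat (Suc k) * bernpoly k x)) (at x))
             \<and> integral {0..1} f = 0)"

definition heaviside :: "real \<Rightarrow> real" where
  "heaviside x = (if x > 0 then 1 else 0)"

end

theory Submission
  imports Defs
begin

text \<open>
  For r < 1 both factors of the integrand are absolutely convergent series in the harmonics
  e(j\<phi>) = exp(2\<pi>ij\<phi>), with coefficients of size r^j/j^m and r^j/j^n. By orthogonality the
  \<phi>-integral is \<Sum>_j r^(2j) ((-1)^n e(j\<theta>) - (-1)^m e(-j\<theta>)) / j^(m+n), where \<theta> = \<alpha> - \<beta>, and
  integrating against dr/r up to t gives (-1)^n/2 (Li_N(t^2 e(y)) + (-1)^N Li_N(t^2 e(-y))) with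
  N = m+n+1 and y = \<theta> + H(\<beta> - \<alpha>) \<in> (0,1).

  What remains is the Abel summability of the Fourier series of B_N: as s \<rightarrow> 1-,
  Li_N(s e(y)) + (-1)^N Li_N(s e(-y)) tends to -(2\<pi>i)^N/N! B_N(y). For N = 1 this is the explicit
  value of Ln(1 - e(y)). Both sides have mean zero in y and their y-derivatives at level N+1 are
  2\<pi>i times the corresponding functions at level N, so the sup norm of the difference at level N+1 is
  at most 4\<pi> times its L1 norm at level N; dominated convergence at level 1 propagates to every N.
\<close>

section \<open>Bernoulli polynomials\<close>

declare bernpoly.simps(2)[simp del]

lemma eq_if_same_derivative_and_integral:
  fixes f h :: "real \<Rightarrow> real"
  assumes "\<And>x. (f has_real_derivative g x) (at x)" "\<And>x. (h has_real_derivative g x) (at x)"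
    and "integral {0..1} f = integral {0..1} h"
  shows "f = h"
proof -
  have "\<forall>x. ((\<lambda>x. f x - h x) has_real_derivative 0) (at x)"
    using assms(1,2) by (auto intro!: derivative_eq_intros)
  from DERIV_isconst_all[OF this] have const: "f x - h x = f 0 - h 0" for x
    by simp
  have "continuous_on {0..1} f" "continuous_on {0..1} h"
    using assms(1,2) by (meson DERIV_continuous continuous_at_imp_continuous_on)+
  then have "integral {0..1} (\<lambda>x. f x - h x) = 0"
    using assms(3) by (subst integral_diff) (auto intro!: integrable_continuous_real)
  moreover have "integral {0..1} (\<lambda>x. f x - h x) = f 0 - h 0"
    by (subst const) simp
  ultimately show ?thesis
    using const by (intro ext) (metis eq_iff_diff_eq_0)
qed

lemma real_polynomial_function_antiderivative:
  assumes "real_polynomial_function g"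
  obtains F where "real_polynomial_function F" "\<And>x. (F has_real_derivative g x) (at x)"
proof -
  obtain a d where g: "g = (\<lambda>x. \<Sum>i\<le>d. a i * x ^ i)"
    using assms real_polynomial_function_iff_sum by blast
  define F where "F = (\<lambda>x::real. \<Sum>i\<le>d. a i / real (Suc i) * x ^ Suc i)"
  have "real_polynomial_function F"
    unfolding F_def
    by (intro real_polynomial_function_sum real_polynomial_function_power
        real_polynomial_function.intros(4)[OF real_polynomial_function.intros(2)]
        real_polynomial_function.intros(1) bounded_linear_ident) simp
  moreover have "(F has_real_derivative g x) (at x)" for x
  proof -
    have "(F has_real_derivative (\<Sum>i\<le>d. a i / real (Suc i) * (real (Suc i) * x ^ i))) (at x)"
      unfolding F_def by (intro derivative_eq_intros) auto
    then show ?thesis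
      by (simp add: g del: of_nat_Suc)
  qed
  ultimately show ?thesis using that by blast
qed

lemma real_polynomial_function_normalized_antiderivative:
  assumes "real_polynomial_function g"
  obtains F where "real_polynomial_function F" "\<And>x. (F has_real_derivative g x) (at x)"
    "integral {0..1} F = 0"
proof -
  obtain F0 where F0: "real_polynomial_function F0" "\<And>x. (F0 has_real_derivative g x) (at x)"
    using real_polynomial_function_antiderivative[OF assms] by blast
  define F where "F = (\<lambda>x. F0 x - integral {0..1} F0)"
  have "continuous_on {0..1} F0"
    using F0(1) continuous_on_polymonial_function real_polynomial_function_eq by blast
  then have "integral {0..1} F = 0"
    unfolding F_def by (subst integral_diff) (auto intro!: integrable_continuous_real)
  moreover have "real_polynomial_function F"
    unfolding F_def using F0(1) by (intro real_polynomial_function_diff) auto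
  moreover have "(F has_real_derivative g x) (at x)" for x
    unfolding F_def using F0(2)[of x] by (auto intro!: derivative_eq_intros)
  ultimately show ?thesis using that by blast
qed

lemma bernpoly_Suc_char:
  assumes "real_polynomial_function (bernpoly k)"
  shows "real_polynomial_function (bernpoly (Suc k))"
    and "(bernpoly (Suc k) has_real_derivative (of_nat (Suc k) * bernpoly k x)) (at x)"
    and "integral {0..1} (bernpoly (Suc k)) = 0"
proof -
  define P where "P F \<longleftrightarrow> (\<forall>x. (F has_real_derivative (of_nat (Suc k) * bernpoly k x)) (at x))
    \<and> integral {0..1} F = 0" for F
  have "real_polynomial_function (\<lambda>x. of_nat (Suc k) * bernpoly k x)"
    by (rule real_polynomial_function.intros(4)[OF real_polynomial_function.intros(2) assms])
  then obtain F where F: "real_polynomial_function F" "P F"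
    unfolding P_def by (metis real_polynomial_function_normalized_antiderivative)
  have "bernpoly (Suc k) = (THE F. P F)"
    unfolding P_def bernpoly.simps(2) ..
  also have "(THE F. P F) = F"
  proof (rule the_equality)
    show "P F" by (rule F(2))
    show "G = F" if "P G" for G
      using that F(2) unfolding P_def
      by (intro eq_if_same_derivative_and_integral[where g = "\<lambda>x. of_nat (Suc k) * bernpoly k x"]) auto
  qed
  finally show "real_polynomial_function (bernpoly (Suc k))"
    "(bernpoly (Suc k) has_real_derivative (of_nat (Suc k) * bernpoly k x)) (at x)"
    "integral {0..1} (bernpoly (Suc k)) = 0"
    using F unfolding P_def by simp_all
qed

lemma real_polynomial_function_bernpoly: "real_polynomial_function (bernpoly k)"
proof (induction k)
  case 0
  show ?case by (simp add: real_polynomial_function.intros(2))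
next
  case (Suc k)
  then show ?case by (rule bernpoly_Suc_char(1))
qed

lemma has_real_derivative_bernpoly:
  "(bernpoly (Suc k) has_real_derivative (of_nat (Suc k) * bernpoly k x)) (at x)"
  by (rule bernpoly_Suc_char(2)[OF real_polynomial_function_bernpoly])

lemma integral_bernpoly: "integral {0..1} (bernpoly (Suc k)) = 0"
  by (rule bernpoly_Suc_char(3)[OF real_polynomial_function_bernpoly])

lemma continuous_on_bernpoly: "continuous_on A (bernpoly k)"
  using continuous_on_polymonial_function real_polynomial_function_bernpoly
    real_polynomial_function_eq by blast

lemma bernpoly_1 [simp]: "bernpoly (Suc 0) x = x - 1/2"
proof -
  have "((\<lambda>x::real. x - 1/2) has_integral (1/2 - 1/2)) {0..1}"
    using has_integral_diff[OF ident_has_integral[of 0 1] has_integral_const_real[of "1/2" 0 1]]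
    by simp
  then have "integral {0..1} (bernpoly (Suc 0)) = integral {0..1} (\<lambda>x::real. x - 1/2)"
    using integral_bernpoly[of 0] by (simp add: integral_unique)
  then have "bernpoly (Suc 0) = (\<lambda>x. x - 1/2)"
    using has_real_derivative_bernpoly[of 0]
    by (intro eq_if_same_derivative_and_integral[where g = "\<lambda>_. 1"]) (auto intro!: derivative_eq_intros)
  then show ?thesis by simp
qed

lemma bernpoly_periodic: "bernpoly (Suc (Suc k)) 1 = bernpoly (Suc (Suc k)) 0"
proof -
  have "(bernpoly (Suc k) has_integral 0) {0..1}"
    by (metis integrable_integral integrable_continuous_real continuous_on_bernpoly integral_bernpoly)
  from has_integral_mult_right[OF this, of "of_nat (Suc (Suc k))"]
  have "((\<lambda>x. of_nat (Suc (Suc k)) * bernpoly (Suc k) x) has_integral 0) {0..1}"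
    by simp
  moreover have "((\<lambda>x. of_nat (Suc (Suc k)) * bernpoly (Suc k) x) has_integral
       (bernpoly (Suc (Suc k)) 1 - bernpoly (Suc (Suc k)) 0)) {0..1}"
  proof (rule fundamental_theorem_of_calculus)
    show "(bernpoly (Suc (Suc k)) has_vector_derivative of_nat (Suc (Suc k)) * bernpoly (Suc k) x)
        (at x within {0..1})" for x
      by (meson has_real_derivative_bernpoly has_field_derivative_at_within
          has_real_derivative_iff_has_vector_derivative)
  qed simp
  ultimately have "0 = bernpoly (Suc (Suc k)) 1 - bernpoly (Suc (Suc k)) 0"
    by (rule has_integral_unique)
  then show ?thesis
    by simp
qed

section \<open>Integrals of series and of mean-zero functions\<close>

lemma Weierstrass_continuous_on_suminf:
  fixes g :: "nat \<Rightarrow> real \<Rightarrow> 'a::banach"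
  assumes "\<And>j. continuous_on {a..b} (g j)"
    and "\<And>j x. x \<in> {a..b} \<Longrightarrow> norm (g j x) \<le> M j" and "summable M"
  shows "continuous_on {a..b} (\<lambda>x. \<Sum>j. g j x)"
proof (rule uniform_limit_theorem)
  show "uniform_limit {a..b} (\<lambda>n x. \<Sum>j<n. g j x) (\<lambda>x. \<Sum>j. g j x) sequentially"
    by (rule Weierstrass_m_test[OF assms(2,3)])
  show "\<forall>\<^sub>F n in sequentially. continuous_on {a..b} (\<lambda>x. \<Sum>j<n. g j x)"
    by (intro always_eventually allI continuous_intros assms(1))
qed simp

lemma Weierstrass_sums_integral:
  fixes g :: "nat \<Rightarrow> real \<Rightarrow> 'a::banach"
  assumes c: "\<And>j. continuous_on {a..b} (g j)"
    and "\<And>j x. x \<in> {a..b} \<Longrightarrow> norm (g j x) \<le> M j" and "summable M"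
  shows "(\<lambda>j. integral {a..b} (g j)) sums integral {a..b} (\<lambda>x. \<Sum>j. g j x)"
proof -
  have "uniform_limit {a..b} (\<lambda>n x. \<Sum>j<n. g j x) (\<lambda>x. \<Sum>j. g j x) sequentially"
    by (rule Weierstrass_m_test[OF assms(2,3)])
  then obtain I J where I: "\<And>n. ((\<lambda>x. \<Sum>j<n. g j x) has_integral I n) {a..b}"
    and "((\<lambda>x. \<Sum>j. g j x) has_integral J) {a..b}" and "I \<longlonglongrightarrow> J"
    by (rule uniform_limit_integral) (auto intro!: continuous_intros c)
  moreover have "I = (\<lambda>n. \<Sum>j<n. integral {a..b} (g j))"
  proof
    fix n
    have "((\<lambda>x. \<Sum>j<n. g j x) has_integral (\<Sum>j<n. integral {a..b} (g j))) {a..b}"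
      by (intro has_integral_sum) (auto intro: integrable_integral integrable_continuous_real c)
    with I[of n] show "I n = (\<Sum>j<n. integral {a..b} (g j))"
      by (rule has_integral_unique)
  qed
  ultimately show ?thesis
    unfolding sums_def by (simp add: integral_unique)
qed

lemma has_integral_power:
  assumes "0 \<le> t"
  shows "((\<lambda>r. r ^ k) has_integral (t ^ Suc k / Suc k)) {0..t}"
proof -
  have "((\<lambda>r. r ^ Suc k / Suc k) has_real_derivative (real (Suc k) * r ^ (Suc k - 1) / Suc k))
      (at r within {0..t})" for r
    by (intro derivative_eq_intros) auto
  then have "((\<lambda>r. r ^ Suc k / Suc k) has_vector_derivative r ^ k) (at r within {0..t})" for r
    by (simp add: has_real_derivative_iff_has_vector_derivative[symmetric] del: of_nat_Suc)
  then have "((\<lambda>r. r ^ k) has_integral (t ^ Suc k / Suc k - 0 ^ Suc k / Suc k)) {0..t}"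
    using assms by (intro fundamental_theorem_of_calculus) auto
  then show ?thesis
    by simp
qed

lemma sums_odd_power_series_divide:
  fixes w :: "nat \<Rightarrow> 'a::real_normed_field"
  assumes "(\<lambda>k. of_real r ^ (2 * Suc k) * w k) sums G"
  shows "(\<lambda>k. of_real (r ^ (2 * k + 1)) * w k) sums (G / of_real r)"
proof (cases "r = 0")
  case True
  then show ?thesis
    by (simp add: sums_zero)
next
  case False
  then show ?thesis
    using sums_divide[OF assms(1), of "of_real r"] by (simp add: power_mult_distrib field_simps)
qed

lemma integral_odd_power_series:
  fixes w :: "nat \<Rightarrow> complex" and G :: "real \<Rightarrow> complex"
  assumes G: "\<And>r. r \<in> {0..<1} \<Longrightarrow> (\<lambda>k. of_real r ^ (2 * Suc k) * w k) sums G r"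
    and w: "\<And>k. norm (w k) \<le> C" and t: "0 < t" "t < 1"
  shows "(\<lambda>r. G r / of_real r) integrable_on {0..t}"
    and "(\<lambda>k. of_real (t ^ (2 * k + 2) / (2 * k + 2)) * w k) sums integral {0..t} (\<lambda>r. G r / of_real r)"
proof -
  define u where "u k r = of_real (r ^ (2 * k + 1)) * w k" for k r
  have sums_u: "(\<lambda>k. u k r) sums (G r / of_real r)" if "r \<in> {0..t}" for r
    unfolding u_def using sums_odd_power_series_divide[OF G[of r]] that t by simp
  have u_le: "norm (u k r) \<le> C * t * (t ^ 2) ^ k" if "r \<in> {0..t}" for k r
  proof -
    have "norm (u k r) = r ^ (2 * k + 1) * norm (w k)"
      using that by (simp add: u_def norm_mult norm_power)
    also have "\<dots> \<le> t ^ (2 * k + 1) * C"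
      using that w[of k] by (intro mult_mono power_mono) auto
    also have "t ^ (2 * k + 1) = t * (t ^ 2) ^ k"
      by (simp add: power_mult[symmetric] power_add)
    finally show ?thesis
      by (simp add: mult_ac)
  qed
  have summable: "summable (\<lambda>k. C * t * (t ^ 2) ^ k)"
    using t by (intro summable_mult summable_geometric) (simp add: abs_square_less_1)
  have cont: "continuous_on {0..t} (u k)" for k
    unfolding u_def by (intro continuous_intros)
  have eq: "(\<Sum>k. u k r) = G r / of_real r" if "r \<in> {0..t}" for r
    using sums_u[OF that] by (simp add: sums_iff)
  show "(\<lambda>r. G r / of_real r) integrable_on {0..t}"
    using integrable_continuous_real[OF Weierstrass_continuous_on_suminf[OF cont u_le summable]] eq
    by (rule integrable_eq)
  have integral_u: "integral {0..t} (u k) = of_real (t ^ (2 * k + 2) / (2 * k + 2)) * w k" for k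
  proof -
    have "(u k has_integral of_real (t ^ Suc (2 * k + 1) / Suc (2 * k + 1)) * w k) {0..t}"
      using has_integral_mult_left[OF has_integral_of_real[OF has_integral_power[OF less_imp_le[OF t(1)],
            of "2 * k + 1"]], where c = "w k"]
      unfolding u_def by (simp only: o_def)
    then show ?thesis
      by (simp add: integral_unique)
  qed
  have "integral {0..t} (\<lambda>r. \<Sum>k. u k r) = integral {0..t} (\<lambda>r. G r / of_real r)"
    by (intro integral_cong eq)
  then show "(\<lambda>k. of_real (t ^ (2 * k + 2) / (2 * k + 2)) * w k) sums integral {0..t} (\<lambda>r. G r / of_real r)"
    using Weierstrass_sums_integral[OF cont u_le summable] unfolding integral_u by simp
qed

lemma norm_le_integral_derivative_if_mean_zero:
  fixes F f :: "real \<Rightarrow> complex"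
  assumes F': "\<And>x. x \<in> {0..1} \<Longrightarrow> (F has_vector_derivative f x) (at x within {0..1})"
    and f: "continuous_on {0..1} f" and mean: "integral {0..1} F = 0" and y: "y \<in> {0..1}"
  shows "norm (F y) \<le> 2 * integral {0..1} (\<lambda>u. norm (f u))"
proof -
  define E where "E = integral {0..1} (\<lambda>u. norm (f u))"
  have F: "continuous_on {0..1} F"
    unfolding continuous_on_eq_continuous_within using F' has_vector_derivative_continuous by blast
  have osc: "norm (F x - F 0) \<le> E" if x: "x \<in> {0..1}" for x
  proof -
    have f_x: "continuous_on {0..x} f"
      using x by (auto intro: continuous_on_subset[OF f])
    have "(f has_integral (F x - F 0)) {0..x}"
      using x by (intro fundamental_theorem_of_calculus)
        (auto intro: has_vector_derivative_within_subset[OF F'])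
    then have "F x - F 0 = integral {0..x} f"
      by (rule integral_unique[symmetric])
    also have "norm \<dots> \<le> integral {0..x} (\<lambda>u. norm (f u))"
      using f_x by (intro integral_norm_bound_integral) (auto intro!: integrable_continuous_real
          continuous_intros)
    also have "\<dots> \<le> E"
      unfolding E_def using x
      by (intro integral_subset_le)
        (auto intro!: integrable_continuous_real continuous_intros continuous_on_subset[OF f])
    finally show ?thesis .
  qed
  have "(F has_integral 0) {0..1}"
    using mean integrable_continuous_real[OF F] by (simp add: has_integral_iff)
  from has_integral_diff[OF this has_integral_const_real[of "F 0" 0 1]]
  have "- F 0 = integral {0..1} (\<lambda>x. F x - F 0)"
    by (simp add: integral_unique)
  then have "norm (F 0) = norm (integral {0..1} (\<lambda>x. F x - F 0))"
    by (metis norm_minus_cancel)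
  also have "\<dots> \<le> integral {0..1} (\<lambda>x::real. E)"
    by (intro integral_norm_bound_integral osc) (auto intro!: integrable_continuous_real continuous_intros F)
  also have "\<dots> = E"
    by simp
  finally show ?thesis
    using osc[OF y] norm_triangle_sub[of "F y" "F 0"] unfolding E_def by linarith
qed

section \<open>Symmetric harmonics on the unit interval\<close>

definition e2pi :: "real \<Rightarrow> complex" where
  "e2pi t = exp (2 * of_real pi * \<i> * of_real t)"

lemma e2pi_add: "e2pi (a + b) = e2pi a * e2pi b"
  unfolding e2pi_def by (simp add: distrib_left exp_add[symmetric])

lemma e2pi_of_int [simp]: "e2pi (of_int k) = 1"
  unfolding e2pi_def using exp_integer_2pi[of "of_int k"] by (simp add: mult_ac)

lemma e2pi_0 [simp]: "e2pi 0 = 1"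
  by (simp add: e2pi_def)

lemma e2pi_periodic: "e2pi (t + of_int k) = e2pi t"
  by (simp add: e2pi_add)

lemma e2pi_power: "e2pi t ^ n = e2pi (of_nat n * t)"
  unfolding e2pi_def exp_of_nat_mult[symmetric] by (simp add: mult_ac)

lemma norm_e2pi [simp]: "norm (e2pi t) = 1"
  unfolding e2pi_def by (simp add: norm_exp_eq_Re)

lemma cnj_e2pi: "cnj (e2pi t) = e2pi (- t)"
  unfolding e2pi_def by (simp add: exp_cnj)

lemma continuous_on_e2pi [continuous_intros]:
  "continuous_on S f \<Longrightarrow> continuous_on S (\<lambda>x. e2pi (f x))"
  unfolding e2pi_def by (auto intro!: continuous_intros)

lemma has_vector_derivative_e2pi:
  "((\<lambda>t. e2pi (p * t)) has_vector_derivative (2 * of_real pi * \<i> * of_real p * e2pi (p * t)))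
     (at t within S)"
proof -
  have "((\<lambda>z. exp (2 * of_real pi * \<i> * (of_real p * z))) has_field_derivative
      (2 * of_real pi * \<i> * of_real p * exp (2 * of_real pi * \<i> * (of_real p * of_real t))))
      (at (of_real t))"
    by (auto intro!: derivative_eq_intros)
  from has_vector_derivative_real_field[OF this, of S] show ?thesis
    unfolding e2pi_def by simp
qed

lemma has_integral_e2pi:
  fixes p :: int
  shows "((\<lambda>t. e2pi (of_int p * t)) has_integral (if p = 0 then 1 else 0)) {0..1}"
proof (cases "p = 0")
  case True
  then show ?thesis
    using has_integral_const_real[of "1::complex" 0 1] by simp
next
  case False
  define c :: complex where "c = 2 * of_real pi * \<i> * of_real (of_int p)"
  have "c \<noteq> 0" using False by (simp add: c_def)
  have "((\<lambda>t. e2pi (of_int p * t) / c) has_vector_derivative e2pi (of_int p * t))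
      (at t within {0..1})" for t
    using has_vector_derivative_divide[OF has_vector_derivative_e2pi[of "of_int p"], where a = c] \<open>c \<noteq> 0\<close>
    unfolding c_def by simp
  then have "((\<lambda>t. e2pi (of_int p * t)) has_integral
      (e2pi (of_int p * 1) / c - e2pi (of_int p * 0) / c)) {0..1}"
    by (intro fundamental_theorem_of_calculus) auto
  then show ?thesis using False by simp
qed

definition sym_harmonic :: "complex \<Rightarrow> complex \<Rightarrow> nat \<Rightarrow> real \<Rightarrow> complex" where
  "sym_harmonic a b J t = a * e2pi (real J * t) + b * e2pi (- real J * t)"

lemma continuous_on_sym_harmonic [continuous_intros]:
  "continuous_on S (sym_harmonic a b J)"
  unfolding sym_harmonic_def by (intro continuous_intros)

lemma norm_sym_harmonic_le: "norm (sym_harmonic a b J t) \<le> norm a + norm b"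
  unfolding sym_harmonic_def
  using norm_triangle_ineq[of "a * e2pi (real J * t)" "b * e2pi (- real J * t)"]
  by (simp add: norm_mult)

lemma has_integral_sym_harmonic_mult:
  assumes "J > 0" "K > 0"
  shows "((\<lambda>t. sym_harmonic a1 a2 J t * sym_harmonic b1 b2 K t)
     has_integral (if J = K then a1 * b2 + a2 * b1 else 0)) {0..1}"
proof -
  define E where "E p t = e2pi (of_int p * t)" for p t
  have "sym_harmonic a1 a2 J t * sym_harmonic b1 b2 K t
     = a1 * b1 * E (int J + int K) t + a1 * b2 * E (int J - int K) t
       + a2 * b1 * E (int K - int J) t + a2 * b2 * E (- int J - int K) t" for t
    unfolding sym_harmonic_def E_def by (simp add: e2pi_add[symmetric] algebra_simps)
  moreover have "((\<lambda>t. a1 * b1 * E (int J + int K) t + a1 * b2 * E (int J - int K) t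
       + a2 * b1 * E (int K - int J) t + a2 * b2 * E (- int J - int K) t) has_integral
      (a1 * b1 * (if int J + int K = 0 then 1 else 0) + a1 * b2 * (if int J - int K = 0 then 1 else 0)
       + a2 * b1 * (if int K - int J = 0 then 1 else 0)
       + a2 * b2 * (if - int J - int K = 0 then 1 else 0))) {0..1}"
    unfolding E_def by (intro has_integral_add has_integral_mult_right has_integral_e2pi)
  ultimately show ?thesis
    using assms by (auto cong: if_cong)
qed

lemma sym_harmonic_series:
  assumes M: "summable M" and a: "\<And>j. norm (a1 j) + norm (a2 j) \<le> M j"
  shows "summable (\<lambda>j. sym_harmonic (a1 j) (a2 j) (Suc j) t)"
    and "norm (\<Sum>j. sym_harmonic (a1 j) (a2 j) (Suc j) t) \<le> suminf M"
    and "continuous_on {0..1} (\<lambda>t. \<Sum>j. sym_harmonic (a1 j) (a2 j) (Suc j) t)"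
proof -
  have le: "norm (sym_harmonic (a1 j) (a2 j) (Suc j) t) \<le> M j" for j t
    using a norm_sym_harmonic_le order_trans by metis
  show "summable (\<lambda>j. sym_harmonic (a1 j) (a2 j) (Suc j) t)"
    by (rule summable_comparison_test'[OF M le])
  show "norm (\<Sum>j. sym_harmonic (a1 j) (a2 j) (Suc j) t) \<le> suminf M"
    by (rule norm_suminf_le[OF le M])
  show "continuous_on {0..1} (\<lambda>t. \<Sum>j. sym_harmonic (a1 j) (a2 j) (Suc j) t)"
    by (intro Weierstrass_continuous_on_suminf[OF _ _ M] continuous_intros le)
qed

lemma integral_sym_harmonic_series_mult:
  assumes M: "summable M" and a: "\<And>j. norm (a1 j) + norm (a2 j) \<le> M j"
  shows "integral {0..1} (\<lambda>t. (\<Sum>j. sym_harmonic (a1 j) (a2 j) (Suc j) t) * sym_harmonic b1 b2 (Suc k) t)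
    = a1 k * b2 + a2 k * b1"
proof -
  define u where "u j t = sym_harmonic (a1 j) (a2 j) (Suc j) t * sym_harmonic b1 b2 (Suc k) t" for j t
  have M_nonneg: "0 \<le> M j" for j
    using a[of j] by (meson add_nonneg_nonneg norm_ge_zero order_trans)
  have "norm (u j t) \<le> M j * (norm b1 + norm b2)" for j t
    unfolding u_def norm_mult
    using a[of j] norm_sym_harmonic_le[of "a1 j"] norm_sym_harmonic_le[of b1]
    by (intro mult_mono) (auto intro: order_trans M_nonneg)
  then have "(\<lambda>j. integral {0..1} (u j)) sums integral {0..1} (\<lambda>t. \<Sum>j. u j t)"
    using M unfolding u_def
    by (intro Weierstrass_sums_integral[where M = "\<lambda>j. M j * (norm b1 + norm b2)"] summable_mult2)
      (auto intro!: continuous_intros)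
  moreover have "integral {0..1} (u j) = (if j = k then a1 k * b2 + a2 k * b1 else 0)" for j
    unfolding u_def using has_integral_sym_harmonic_mult[of "Suc j" "Suc k"]
    by (auto simp: integral_unique)
  moreover have "(\<Sum>j. u j t) = (\<Sum>j. sym_harmonic (a1 j) (a2 j) (Suc j) t) * sym_harmonic b1 b2 (Suc k) t"
    for t
    unfolding u_def by (rule suminf_mult2[OF sym_harmonic_series(1)[OF M a], symmetric])
  ultimately show ?thesis
    using sums_single[of k "\<lambda>_. a1 k * b2 + a2 k * b1"] by (simp add: sums_iff)
qed

lemma sums_integral_sym_harmonic_series_mult:
  assumes M: "summable M"
    and a: "\<And>j. norm (a1 j) + norm (a2 j) \<le> M j" and b: "\<And>j. norm (b1 j) + norm (b2 j) \<le> M j"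
  defines "A \<equiv> \<lambda>t. \<Sum>j. sym_harmonic (a1 j) (a2 j) (Suc j) t"
    and "B \<equiv> \<lambda>t. \<Sum>k. sym_harmonic (b1 k) (b2 k) (Suc k) t"
  shows "continuous_on {0..1} (\<lambda>t. A t * B t)"
    and "(\<lambda>k. a1 k * b2 k + a2 k * b1 k) sums integral {0..1} (\<lambda>t. A t * B t)"
proof -
  note A = sym_harmonic_series[OF M a] and B = sym_harmonic_series[OF M b]
  show "continuous_on {0..1} (\<lambda>t. A t * B t)"
    unfolding A_def B_def using A(3) B(3) by (intro continuous_intros)
  have M_nonneg: "0 \<le> M j" for j
    using a[of j] by (meson add_nonneg_nonneg norm_ge_zero order_trans)
  have "norm (A t * sym_harmonic (b1 k) (b2 k) (Suc k) t) \<le> suminf M * M k" for k t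
    unfolding norm_mult A_def using A(2) order_trans[OF norm_sym_harmonic_le b]
    by (intro mult_mono) (auto intro: suminf_nonneg M M_nonneg)
  then have "(\<lambda>k. integral {0..1} (\<lambda>t. A t * sym_harmonic (b1 k) (b2 k) (Suc k) t))
      sums integral {0..1} (\<lambda>t. \<Sum>k. A t * sym_harmonic (b1 k) (b2 k) (Suc k) t)"
    using M A(3) unfolding A_def by (intro Weierstrass_sums_integral[where M = "\<lambda>k. suminf M * M k"] summable_mult)
      (auto intro!: continuous_intros)
  moreover have "(\<Sum>k. A t * sym_harmonic (b1 k) (b2 k) (Suc k) t) = A t * B t" for t
    unfolding B_def by (rule suminf_mult[OF B(1)])
  ultimately show "(\<lambda>k. a1 k * b2 k + a2 k * b1 k) sums integral {0..1} (\<lambda>t. A t * B t)"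
    unfolding A_def by (simp add: integral_sym_harmonic_series_mult[OF M a])
qed

section \<open>The polylogarithm in the unit disc\<close>

lemma norm_power_div_of_nat_power_le:
  "norm (z ^ j / of_nat (Suc i) ^ k :: complex) \<le> norm z ^ j"
proof -
  have "norm (z ^ j / of_nat (Suc i) ^ k :: complex) = norm z ^ j / real (Suc i) ^ k"
    by (simp add: norm_divide norm_power del: of_nat_Suc)
  also have "\<dots> \<le> norm z ^ j"
    using divide_left_mono[of 1 "real (Suc i) ^ k" "norm z ^ j"]
    by (simp add: one_le_power del: of_nat_Suc)
  finally show ?thesis .
qed

lemma summable_power_div_of_nat_power:
  assumes "norm z < 1"
  shows "summable (\<lambda>i. z ^ (i + d) / of_nat (Suc i) ^ k :: complex)"
proof (rule summable_comparison_test'[OF _ norm_power_div_of_nat_power_le])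
  show "summable (\<lambda>i. norm z ^ (i + d))"
    using assms by (simp add: power_add summable_geometric summable_mult2)
qed

lemma polylog_sums: "norm z < 1 \<Longrightarrow> (\<lambda>j. z ^ Suc j / of_nat (Suc j) ^ k) sums polylog k z"
  unfolding polylog_def using summable_power_div_of_nat_power[of z 1 k]
  by (simp add: summable_sums)

lemma polylog_cnj: "norm z < 1 \<Longrightarrow> cnj (polylog k z) = polylog k (cnj z)"
  using sums_cnj[THEN iffD2, OF polylog_sums[of z k]] polylog_sums[of "cnj z" k]
  by (simp add: sums_unique2)

lemma polylog_1: "norm w < 1 \<Longrightarrow> polylog 1 w = - Ln (1 - w)"
proof -
  assume w: "norm w < 1"
  have "(\<lambda>n. - ((- (- w)) ^ n) / of_nat n) sums Ln (1 + - w)"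
    by (rule Ln_series') (use w in simp)
  then have "(\<lambda>n. - (w ^ Suc n) / of_nat (Suc n)) sums Ln (1 - w)"
    using sums_Suc_iff[of "\<lambda>n. - (w ^ n) / of_nat n"] by simp
  then have "(\<lambda>n. w ^ Suc n / of_nat (Suc n) ^ 1) sums - Ln (1 - w)"
    using sums_minus by fastforce
  then show ?thesis using polylog_sums[OF w, of 1] sums_unique2 by blast
qed

definition polylog_coeff :: "nat \<Rightarrow> nat \<Rightarrow> complex" where
  "polylog_coeff k n = (if n = 0 then 0 else 1 / of_nat n ^ k)"

lemma polylog_power_series:
  "norm z < 1 \<Longrightarrow> (\<lambda>n. polylog_coeff k n * z ^ n) sums polylog k z"
  using polylog_sums[of z k] sums_Suc_iff[of "\<lambda>n. polylog_coeff k n * z ^ n"]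
  by (simp add: polylog_coeff_def del: of_nat_Suc power_Suc)

lemma has_field_derivative_polylog_diffs:
  assumes "norm z < 1"
  shows "(polylog k has_field_derivative (\<Sum>n. diffs (polylog_coeff k) n * z ^ n)) (at z)"
proof -
  have "((\<lambda>z. \<Sum>n. polylog_coeff k n * z ^ n) has_field_derivative
      (\<Sum>n. diffs (polylog_coeff k) n * z ^ n)) (at z)"
    by (rule termdiffs_strong'[of 1]) (use assms polylog_power_series sums_summable in auto)
  then show ?thesis
    by (rule has_field_derivative_transform_within_open[of _ _ _ "ball 0 1"])
       (use assms in \<open>auto simp: sums_unique[OF polylog_power_series, symmetric]\<close>)
qed

lemma has_field_derivative_polylog:
  assumes "norm z < 1"
  shows "(polylog (Suc k) has_field_derivative (\<Sum>n. z ^ n / of_nat (Suc n) ^ k)) (at z)"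
proof -
  have "diffs (polylog_coeff (Suc k)) n = 1 / of_nat (Suc n) ^ k" for n
    unfolding diffs_def polylog_coeff_def by (simp del: of_nat_Suc add: field_simps)
  then show ?thesis
    using has_field_derivative_polylog_diffs[OF assms, of "Suc k"] by simp
qed

lemma mult_polylog_derivative:
  assumes "norm z < 1"
  shows "z * (\<Sum>n. z ^ n / of_nat (Suc n) ^ k) = polylog k z"
proof -
  have "z * (\<Sum>n. z ^ n / of_nat (Suc n) ^ k) = (\<Sum>n. z * (z ^ n / of_nat (Suc n) ^ k))"
    using summable_power_div_of_nat_power[OF assms, of 0 k] by (simp add: suminf_mult[symmetric])
  then show ?thesis
    unfolding polylog_def by (simp add: mult.assoc)
qed

lemma continuous_on_polylog [continuous_intros]:
  assumes "continuous_on S f" "\<And>x. x \<in> S \<Longrightarrow> norm (f x) < 1"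
  shows "continuous_on S (\<lambda>x. polylog k (f x))"
proof -
  have "continuous_on (ball 0 1) (polylog k)"
    by (intro continuous_at_imp_continuous_on ballI DERIV_isCont[OF has_field_derivative_polylog_diffs])
      auto
  then show ?thesis
    using assms by (intro continuous_on_compose2[of "ball 0 1" "polylog k" S f]) auto
qed

lemma has_vector_derivative_polylog_e2pi:
  assumes "0 \<le> s" "s < 1"
  shows "((\<lambda>y. polylog (Suc k) (of_real s * e2pi (p * y))) has_vector_derivative
           (2 * of_real pi * \<i> * of_real p * polylog k (of_real s * e2pi (p * y)))) (at y within S)"
proof -
  have w: "norm (of_real s * e2pi (p * y)) < 1"
    using assms by (simp add: norm_mult)
  have D: "((\<lambda>y. polylog (Suc k) (of_real s * e2pi (p * y))) has_vector_derivative
      (of_real s * (2 * of_real pi * \<i> * of_real p * e2pi (p * y)))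
        * (\<Sum>n. (of_real s * e2pi (p * y)) ^ n / of_nat (Suc n) ^ k)) (at y within S)"
    using field_vector_diff_chain_within[OF has_vector_derivative_mult_right[OF has_vector_derivative_e2pi]
        has_field_derivative_at_within[OF has_field_derivative_polylog[OF w]]]
    by (simp add: o_def)
  have eq: "(of_real s * (2 * of_real pi * \<i> * of_real p * e2pi (p * y)))
        * (\<Sum>n. (of_real s * e2pi (p * y)) ^ n / of_nat (Suc n) ^ k)
      = 2 * of_real pi * \<i> * of_real p * polylog k (of_real s * e2pi (p * y))"
    by (simp flip: mult_polylog_derivative[OF w] add: mult_ac)
  show ?thesis
    using D unfolding eq .
qed

section \<open>Abel means of the Fourier series of Bernoulli polynomials\<close>

text \<open>On 0 < y < 1 one has B_N(y) = -N!/(2\<pi>i)^N \<Sum>_{k \<noteq> 0} e(ky)/k^N, and polylog_sym N s y is the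
  Abel mean of the series on the right, its terms weighted by s^|k|.\<close>
definition polylog_sym :: "nat \<Rightarrow> real \<Rightarrow> real \<Rightarrow> complex" where
  "polylog_sym N s y = polylog N (of_real s * e2pi y) + (-1) ^ N * polylog N (of_real s * e2pi (- y))"

definition bernoulli_fourier_factor :: "nat \<Rightarrow> complex" where
  "bernoulli_fourier_factor N = - ((2 * of_real pi * \<i>) ^ N) / of_nat (fact N)"

definition polylog_sym_remainder :: "nat \<Rightarrow> real \<Rightarrow> real \<Rightarrow> complex" where
  "polylog_sym_remainder N s y = polylog_sym N s y - bernoulli_fourier_factor N * of_real (bernpoly N y)"

lemma has_vector_derivative_polylog_sym:
  assumes "0 \<le> s" "s < 1"
  shows "(polylog_sym (Suc N) s has_vector_derivative (2 * of_real pi * \<i> * polylog_sym N s y))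
    (at y within S)"
  using has_vector_derivative_add[OF has_vector_derivative_polylog_e2pi[OF assms, of N 1]
      has_vector_derivative_mult_right[OF has_vector_derivative_polylog_e2pi[OF assms, of N "-1"],
        of "(-1) ^ Suc N"]]
  unfolding polylog_sym_def[abs_def] by (simp add: algebra_simps)

lemma has_vector_derivative_bernoulli_term:
  "((\<lambda>y. bernoulli_fourier_factor (Suc N) * of_real (bernpoly (Suc N) y)) has_vector_derivative
     (2 * of_real pi * \<i> * (bernoulli_fourier_factor N * of_real (bernpoly N y)))) (at y within S)"
proof -
  have "bernoulli_fourier_factor (Suc N) * of_nat (Suc N) = 2 * of_real pi * \<i> * bernoulli_fourier_factor N"
    unfolding bernoulli_fourier_factor_def by (simp add: field_simps del: of_nat_Suc fact_Suc)
      (simp add: fact_Suc)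
  moreover have "((\<lambda>y. of_real (bernpoly (Suc N) y) :: complex) has_vector_derivative
      of_real (of_nat (Suc N) * bernpoly N y)) (at y within S)"
    by (rule has_vector_derivative_of_real)
       (rule has_field_derivative_at_within[OF has_real_derivative_bernpoly])
  ultimately show ?thesis
    using has_vector_derivative_mult_right[of _ _ _ "bernoulli_fourier_factor (Suc N)"]
    by (fastforce simp: mult.assoc[symmetric] simp del: of_nat_Suc)
qed

lemma has_vector_derivative_polylog_sym_remainder:
  assumes "0 \<le> s" "s < 1"
  shows "(polylog_sym_remainder (Suc N) s has_vector_derivative
      (2 * of_real pi * \<i> * polylog_sym_remainder N s y)) (at y within S)"
  unfolding polylog_sym_remainder_def[abs_def]
  using has_vector_derivative_diff[OF has_vector_derivative_polylog_sym[OF assms]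
      has_vector_derivative_bernoulli_term]
  by (simp add: algebra_simps)

lemma continuous_on_polylog_sym_remainder:
  assumes "0 \<le> s" "s < 1"
  shows "continuous_on S (polylog_sym_remainder N s)"
  unfolding polylog_sym_remainder_def[abs_def] polylog_sym_def[abs_def] using assms
  by (intro continuous_intros continuous_on_bernpoly) (auto simp: norm_mult)

lemma integral_polylog_sym_remainder:
  assumes "0 \<le> s" "s < 1"
  shows "integral {0..1} (polylog_sym_remainder (Suc N) s) = 0"
proof -
  have "((\<lambda>y. 2 * of_real pi * \<i> * polylog_sym_remainder (Suc N) s y) has_integral
        (polylog_sym_remainder (Suc (Suc N)) s 1 - polylog_sym_remainder (Suc (Suc N)) s 0)) {0..1}"
    by (intro fundamental_theorem_of_calculus has_vector_derivative_polylog_sym_remainder assms) auto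
  moreover have "polylog_sym_remainder (Suc (Suc N)) s 1 = polylog_sym_remainder (Suc (Suc N)) s 0"
    unfolding polylog_sym_remainder_def polylog_sym_def
    using e2pi_of_int[of 1] e2pi_of_int[of "-1"] by (simp add: bernpoly_periodic)
  ultimately have "((\<lambda>y. 2 * of_real pi * \<i> * polylog_sym_remainder (Suc N) s y) has_integral 0) {0..1}"
    by simp
  from has_integral_mult_right[OF this, of "1 / (2 * of_real pi * \<i>)"]
  show ?thesis
    by (simp add: integral_unique)
qed

lemma norm_polylog_sym_remainder_Suc_le:
  assumes "0 \<le> s" "s < 1" "y \<in> {0..1}"
  shows "norm (polylog_sym_remainder (Suc N) s y)
    \<le> 4 * pi * integral {0..1} (\<lambda>u. norm (polylog_sym_remainder N s u))"
proof -
  have "norm (polylog_sym_remainder (Suc N) s y)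
      \<le> 2 * integral {0..1} (\<lambda>u. norm (2 * of_real pi * \<i> * polylog_sym_remainder N s u))"
    using assms
    by (intro norm_le_integral_derivative_if_mean_zero has_vector_derivative_polylog_sym_remainder
        integral_polylog_sym_remainder continuous_intros continuous_on_polylog_sym_remainder)
  then show ?thesis
    by (simp add: norm_mult)
qed

lemma one_minus_e2pi_eq_exp:
  assumes "0 < y" "y < 1"
  shows "1 - e2pi y = exp (of_real (ln (2 * sin (pi * y))) + \<i> * of_real (pi * y - pi / 2))"
proof -
  have "sin (pi * y) > 0"
    using assms by (intro sin_gt_zero) auto
  moreover have "cos (2 * pi * y) = 1 - 2 * sin (pi * y) ^ 2" "sin (2 * pi * y) = 2 * sin (pi * y) * cos (pi * y)"
    using cos_double_sin[of "pi * y"] sin_double[of "pi * y"] by (simp_all add: mult_ac)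
  ultimately show ?thesis
    by (intro complex_eqI)
      (simp_all add: e2pi_def Re_exp Im_exp cos_diff sin_diff power2_eq_square mult_ac)
qed

lemma Ln_one_minus_e2pi:
  assumes "0 < y" "y < 1"
  shows "Ln (1 - e2pi y) = of_real (ln (2 * sin (pi * y))) + \<i> * of_real (pi * y - pi / 2)"
    and "Ln (1 - e2pi (- y)) = of_real (ln (2 * sin (pi * y))) - \<i> * of_real (pi * y - pi / 2)"
proof -
  have "0 < pi * y" "pi * y < pi"
    using assms by auto
  then have bounds: "- pi < pi * y - pi / 2" "pi * y - pi / 2 < pi"
    by linarith+
  then show "Ln (1 - e2pi y) = of_real (ln (2 * sin (pi * y))) + \<i> * of_real (pi * y - pi / 2)"
    unfolding one_minus_e2pi_eq_exp[OF assms] by (intro Ln_exp) simp_all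
  have "1 - e2pi (- y) = cnj (1 - e2pi y)"
    by (simp add: cnj_e2pi)
  also have "\<dots> = exp (of_real (ln (2 * sin (pi * y))) - \<i> * of_real (pi * y - pi / 2))"
    unfolding one_minus_e2pi_eq_exp[OF assms] exp_cnj by simp
  finally show "Ln (1 - e2pi (- y)) = of_real (ln (2 * sin (pi * y))) - \<i> * of_real (pi * y - pi / 2)"
    using bounds by (simp add: Ln_exp)
qed

lemma polylog_sym_1:
  assumes "0 \<le> s" "s < 1"
  shows "polylog_sym 1 s y = - Ln (1 - of_real s * e2pi y) + Ln (1 - of_real s * e2pi (- y))"
  unfolding polylog_sym_def using assms by (simp add: polylog_1[unfolded One_nat_def] norm_mult)

text \<open>Abel summation of the Fourier series y - 1/2 = - (\<Sum>k \<noteq> 0. e(ky) / (2\<pi>ik)) on 0 < y < 1.\<close>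
lemma tendsto_polylog_sym_remainder_1:
  assumes "0 < y" "y < 1"
  shows "((\<lambda>s. polylog_sym_remainder 1 s y) \<longlongrightarrow> 0) (at_left 1)"
proof -
  define g where "g s = - Ln (1 - of_real s * e2pi y) + Ln (1 - of_real s * e2pi (- y))" for s :: real
  have "Re (1 - e2pi y) > 0" "Re (1 - e2pi (- y)) > 0"
    using sin_gt_zero[of "pi * y"] cos_double_sin[of "pi * y"] assms
    by (simp_all add: e2pi_def Re_exp mult_ac)
  then have "isCont g 1"
    unfolding g_def by (intro continuous_intros) (auto simp: complex_nonpos_Reals_iff)
  then have "(g \<longlongrightarrow> g 1) (at 1)"
    by (rule isContD)
  then have "(g \<longlongrightarrow> g 1) (at_left 1)"
    by (rule tendsto_mono[OF at_le, rotated]) simp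
  moreover have "\<forall>\<^sub>F s in at_left 1. g s = polylog_sym 1 s y"
    using eventually_at_left_real[OF zero_less_one]
    by (rule eventually_mono) (auto simp: g_def polylog_sym_1[unfolded One_nat_def])
  ultimately have "((\<lambda>s. polylog_sym 1 s y) \<longlongrightarrow> g 1) (at_left 1)"
    by (rule Lim_transform_eventually)
  moreover have "g 1 = bernoulli_fourier_factor 1 * of_real (bernpoly 1 y)"
    unfolding g_def
    by (simp only: Ln_one_minus_e2pi[OF assms] mult_1 of_real_1)
      (simp add: bernoulli_fourier_factor_def algebra_simps)
  ultimately show ?thesis
    unfolding polylog_sym_remainder_def by (simp add: LIM_zero)
qed

lemma norm_polylog_sym_remainder_1_le:
  assumes "0 \<le> s" "s < 1" "y \<in> {0..1}"
  shows "norm (polylog_sym_remainder 1 s y) \<le> 3 * pi"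
proof -
  define a where "a = 1 - of_real s * e2pi y"
  have "Re a > 0"
    using complex_Re_le_cmod[of "of_real s * e2pi y"] assms by (simp add: a_def norm_mult)
  then have "a \<noteq> 0"
    by auto
  moreover have conj: "1 - of_real s * e2pi (- y) = cnj a"
    by (simp add: a_def cnj_e2pi)
  ultimately have "Re (- Ln a + Ln (cnj a)) = 0"
    by simp
  then have "norm (polylog_sym 1 s y) = \<bar>Im (- Ln a + Ln (cnj a))\<bar>"
    unfolding polylog_sym_1[OF assms(1,2)] a_def[symmetric] conj by (rule cmod_eq_Im)
  also have "\<dots> \<le> 2 * pi"
    using mpi_less_Im_Ln[of a] Im_Ln_le_pi[of a] mpi_less_Im_Ln[of "cnj a"] Im_Ln_le_pi[of "cnj a"]
      \<open>a \<noteq> 0\<close> by (simp add: abs_le_iff)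
  finally have "norm (polylog_sym 1 s y) \<le> 2 * pi" .
  moreover have "norm (bernoulli_fourier_factor 1 * of_real (bernpoly 1 y)) \<le> pi"
  proof -
    have "complex_of_real y - 1/2 = of_real (y - 1/2)"
      by simp
    then show ?thesis
      using assms(3) by (auto simp only: bernoulli_fourier_factor_def bernpoly_1 norm_of_real
          norm_mult norm_divide norm_minus_cancel norm_power of_real_power) (auto simp: abs_if)
  qed
  ultimately show ?thesis
    unfolding polylog_sym_remainder_def using norm_triangle_ineq4 by (smt (verit))
qed

lemma tendsto_integral_norm_polylog_sym_remainder_1:
  "((\<lambda>s. integral {0..1} (\<lambda>u. norm (polylog_sym_remainder 1 s u))) \<longlongrightarrow> 0) (at_left 1)"
proof (rule tendsto_at_left_sequentially[of 0])
  fix S :: "nat \<Rightarrow> real"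
  assume S1: "\<And>n. S n < 1" and S0: "\<And>n. 0 < S n" and "S \<longlonglongrightarrow> 1"
  then have S: "filterlim S (at_left 1) sequentially"
    by (intro tendsto_imp_filterlim_at_left) auto
  have int: "(\<lambda>u. norm (polylog_sym_remainder 1 (S k) u)) integrable_on {0<..<1}" for k
    using S0[of k] S1[of k]
    by (auto simp: integrable_on_open_interval_real intro!: integrable_continuous_real
        continuous_intros continuous_on_polylog_sym_remainder)
  have "(\<lambda>k. integral {0<..<1} (\<lambda>u. norm (polylog_sym_remainder 1 (S k) u)))
      \<longlonglongrightarrow> integral {0<..<1} (\<lambda>u::real. 0::real)"
  proof (rule dominated_convergence(2)[where h = "\<lambda>u. 3 * pi"])
    show "(\<lambda>u::real. 3 * pi) integrable_on {0<..<1}"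
      by (simp add: integrable_on_open_interval_real integrable_const_ivl)
    show "norm (norm (polylog_sym_remainder 1 (S k) u)) \<le> 3 * pi" if "u \<in> {0<..<1}" for k u
      using norm_polylog_sym_remainder_1_le[of "S k" u] S0[of k] S1[of k] that by simp
    show "(\<lambda>k. norm (polylog_sym_remainder 1 (S k) u)) \<longlonglongrightarrow> 0" if "u \<in> {0<..<1}" for u
      using filterlim_compose[OF tendsto_polylog_sym_remainder_1 S] that by (simp add: tendsto_norm_zero)
  qed (rule int)
  then show "(\<lambda>n. integral {0..1} (\<lambda>u. norm (polylog_sym_remainder 1 (S n) u))) \<longlonglongrightarrow> 0"
    by (simp add: integral_open_interval_real)
qed simp

text \<open>Each step of the recursion costs at most a factor 4\<pi>, so convergence in mean of the
  first remainder propagates to all of them.\<close>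
lemma tendsto_integral_norm_polylog_sym_remainder:
  assumes "N \<ge> 1"
  shows "((\<lambda>s. integral {0..1} (\<lambda>u. norm (polylog_sym_remainder N s u))) \<longlongrightarrow> 0) (at_left 1)"
  using assms
proof (induction N rule: nat_induct_at_least)
  case base
  then show ?case by (rule tendsto_integral_norm_polylog_sym_remainder_1)
next
  case (Suc N)
  have inside: "\<forall>\<^sub>F s in at_left (1::real). s \<in> {0<..<1}"
    by (rule eventually_at_left_real) simp
  have "\<forall>\<^sub>F s in at_left 1. 0 \<le> integral {0..1} (\<lambda>u. norm (polylog_sym_remainder (Suc N) s u))"
    using inside by (rule eventually_mono)
      (auto intro!: integral_nonneg integrable_continuous_real continuous_intros
        continuous_on_polylog_sym_remainder)
  moreover have "\<forall>\<^sub>F s in at_left 1. integral {0..1} (\<lambda>u. norm (polylog_sym_remainder (Suc N) s u))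
      \<le> 4 * pi * integral {0..1} (\<lambda>u. norm (polylog_sym_remainder N s u))"
    using inside
  proof (rule eventually_mono)
    fix s :: real
    assume s: "s \<in> {0<..<1}"
    then have "integral {0..1} (\<lambda>u. norm (polylog_sym_remainder (Suc N) s u))
      \<le> integral {0..1} (\<lambda>u::real. 4 * pi * integral {0..1} (\<lambda>u. norm (polylog_sym_remainder N s u)))"
      by (intro integral_le norm_polylog_sym_remainder_Suc_le integrable_continuous_real
          continuous_intros continuous_on_polylog_sym_remainder) auto
    then show "integral {0..1} (\<lambda>u. norm (polylog_sym_remainder (Suc N) s u))
      \<le> 4 * pi * integral {0..1} (\<lambda>u. norm (polylog_sym_remainder N s u))"
      by simp
  qed
  moreover have "((\<lambda>s. 4 * pi * integral {0..1} (\<lambda>u. norm (polylog_sym_remainder N s u))) \<longlongrightarrow> 0)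
      (at_left 1)"
    using tendsto_mult_right_zero[OF Suc.IH] by (simp add: mult.commute)
  ultimately show ?case
    by (rule tendsto_sandwich[OF _ _ tendsto_const])
qed

theorem tendsto_polylog_sym:
  assumes "N \<ge> 1" "0 < y" "y < 1"
  shows "((\<lambda>s. polylog_sym N s y) \<longlongrightarrow> bernoulli_fourier_factor N * of_real (bernpoly N y)) (at_left 1)"
proof -
  have "((\<lambda>s. polylog_sym_remainder N s y) \<longlongrightarrow> 0) (at_left 1)"
  proof (cases N)
    case (Suc M)
    show ?thesis
    proof (cases "M = 0")
      case True
      then show ?thesis
        using Suc tendsto_polylog_sym_remainder_1[OF assms(2,3)] by simp
    next
      case False
      have "\<forall>\<^sub>F s in at_left 1. norm (polylog_sym_remainder N s y)
          \<le> 4 * pi * integral {0..1} (\<lambda>u. norm (polylog_sym_remainder M s u))"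
        using eventually_at_left_real[OF zero_less_one]
        by (rule eventually_mono) (use assms Suc norm_polylog_sym_remainder_Suc_le in auto)
      moreover have "((\<lambda>s. 4 * pi * integral {0..1} (\<lambda>u. norm (polylog_sym_remainder M s u))) \<longlongrightarrow> 0)
          (at_left 1)"
        using tendsto_mult_right_zero[OF tendsto_integral_norm_polylog_sym_remainder, of M "4 * pi"]
          False by (simp add: mult.commute)
      ultimately show ?thesis
        by (rule Lim_null_comparison)
    qed
  qed (use assms in simp)
  then show ?thesis
    unfolding polylog_sym_remainder_def by (simp add: LIM_zero_iff)
qed

lemma sums_polylog_sym:
  assumes "0 \<le> s" "s < 1"
  shows "(\<lambda>j. of_real s ^ Suc j / of_nat (Suc j) ^ N
      * (e2pi (real (Suc j) * y) + (-1) ^ N * e2pi (- real (Suc j) * y))) sums polylog_sym N s y"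
proof -
  have "(\<lambda>j. (of_real s * e2pi y) ^ Suc j / of_nat (Suc j) ^ N
      + (-1) ^ N * ((of_real s * e2pi (- y)) ^ Suc j / of_nat (Suc j) ^ N)) sums polylog_sym N s y"
    unfolding polylog_sym_def using assms
    by (intro sums_add sums_mult polylog_sums) (simp_all add: norm_mult)
  then show ?thesis
    by (simp add: power_mult_distrib e2pi_power algebra_simps del: power_Suc of_nat_Suc)
qed

lemma tendsto_polylog_sym_square:
  assumes "N \<ge> 1" "0 < y" "y < 1"
  shows "((\<lambda>t. polylog_sym N (t ^ 2) y) \<longlongrightarrow> bernoulli_fourier_factor N * of_real (bernpoly N y))
    (at_left 1)"
proof -
  have "filterlim (\<lambda>t::real. t ^ 2) (at_left 1) (at_left 1)"
  proof (rule tendsto_imp_filterlim_at_left)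
    have "((\<lambda>t::real. t ^ 2) \<longlongrightarrow> 1 ^ 2) (at_left 1)"
      by (intro tendsto_intros)
    then show "((\<lambda>t::real. t ^ 2) \<longlongrightarrow> 1) (at_left 1)"
      by simp
    show "\<forall>\<^sub>F t in at_left 1. t ^ 2 < (1::real)"
      using eventually_at_left_real[OF zero_less_one]
      by (rule eventually_mono) (auto simp: abs_square_less_1)
  qed
  with tendsto_polylog_sym[OF assms] show ?thesis
    by (rule filterlim_compose)
qed

section \<open>The double integral\<close>

text \<open>In polylog_fourier_coeff and fourier_weight the index j stands for the frequency j + 1.\<close>
definition polylog_fourier_coeff :: "nat \<Rightarrow> real \<Rightarrow> real \<Rightarrow> nat \<Rightarrow> complex" where
  "polylog_fourier_coeff k r \<gamma> j = of_real r ^ Suc j * e2pi (- real (Suc j) * \<gamma>) / of_nat (Suc j) ^ k"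

lemma norm_polylog_fourier_coeff_le:
  "0 \<le> r \<Longrightarrow> norm (polylog_fourier_coeff k r \<gamma> j) \<le> r ^ Suc j"
proof -
  assume "0 \<le> r"
  have "norm (polylog_fourier_coeff k r \<gamma> j) = norm (of_real r ^ Suc j / of_nat (Suc j) ^ k :: complex)"
    unfolding polylog_fourier_coeff_def by (simp add: norm_mult norm_divide del: power_Suc of_nat_Suc)
  also have "\<dots> \<le> r ^ Suc j"
    using norm_power_div_of_nat_power_le[of "of_real r" "Suc j" j k] \<open>0 \<le> r\<close> by simp
  finally show ?thesis .
qed

lemma sums_polylog_fourier:
  assumes "0 \<le> r" "r < 1"
  shows "(\<lambda>j. polylog_fourier_coeff k r \<gamma> j * e2pi (real (Suc j) * \<phi>))
    sums polylog k (of_real r * e2pi (\<phi> - \<gamma>))"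
proof -
  have "(of_real r * e2pi (\<phi> - \<gamma>)) ^ Suc j / of_nat (Suc j) ^ k
      = polylog_fourier_coeff k r \<gamma> j * e2pi (real (Suc j) * \<phi>)" for j
    unfolding polylog_fourier_coeff_def power_mult_distrib e2pi_power
    by (simp add: e2pi_add[symmetric] algebra_simps del: power_Suc of_nat_Suc)
  then show ?thesis
    using polylog_sums[of "of_real r * e2pi (\<phi> - \<gamma>)" k] assms by (simp add: norm_mult)
qed

lemma sums_polylog_sym_harmonic:
  assumes "0 \<le> r" "r < 1"
  shows "(\<lambda>j. sym_harmonic (polylog_fourier_coeff k r \<gamma> j) (c * polylog_fourier_coeff k r (- \<gamma>) j)
      (Suc j) \<phi>) sums (polylog k (of_real r * e2pi (\<phi> - \<gamma>)) + c * polylog k (of_real r * e2pi (\<gamma> - \<phi>)))"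
  using sums_add[OF sums_polylog_fourier[OF assms, of k \<gamma> \<phi>]
      sums_mult[OF sums_polylog_fourier[OF assms, of k "- \<gamma>" "- \<phi>"], of c]]
  by (simp add: sym_harmonic_def algebra_simps)

definition fourier_weight :: "nat \<Rightarrow> nat \<Rightarrow> real \<Rightarrow> nat \<Rightarrow> complex" where
  "fourier_weight m n \<theta> k = ((-1) ^ n * e2pi (real (Suc k) * \<theta>) - (-1) ^ m * e2pi (- real (Suc k) * \<theta>))
    / of_nat (Suc k) ^ (m + n)"

lemma norm_fourier_weight_le: "norm (fourier_weight m n \<theta> k) \<le> 2"
proof -
  have "norm (fourier_weight m n \<theta> k)
      \<le> norm ((-1) ^ n * e2pi (real (Suc k) * \<theta>) - (-1) ^ m * e2pi (- real (Suc k) * \<theta>))"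
    unfolding fourier_weight_def
    using norm_power_div_of_nat_power_le[of _ 1 k "m + n"] by simp
  also have "\<dots> \<le> 2"
    using norm_triangle_ineq4[of "(-1) ^ n * e2pi (real (Suc k) * \<theta>)" "(-1) ^ m * e2pi (- real (Suc k) * \<theta>)"]
    by (simp add: norm_mult norm_power)
  finally show ?thesis .
qed

lemma polylog_fourier_coeff_product:
  "polylog_fourier_coeff m r \<beta> k * ((-1) ^ n * polylog_fourier_coeff n r (- \<alpha>) k)
     + (- ((-1) ^ m) * polylog_fourier_coeff m r (- \<beta>) k) * polylog_fourier_coeff n r \<alpha> k
   = of_real r ^ (2 * Suc k) * fourier_weight m n (\<alpha> - \<beta>) k"
proof -
  have "(of_real r :: complex) ^ (2 * Suc k) = of_real r ^ Suc k * of_real r ^ Suc k"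
    by (simp only: mult_2 power_add)
  then show ?thesis
    unfolding polylog_fourier_coeff_def fourier_weight_def
    by (simp add: e2pi_add[symmetric] power_add field_simps del: of_nat_Suc power_Suc)
qed

definition polylog_integrand :: "nat \<Rightarrow> nat \<Rightarrow> real \<Rightarrow> real \<Rightarrow> real \<Rightarrow> real \<Rightarrow> complex" where
  "polylog_integrand m n \<alpha> \<beta> r \<phi> =
    (polylog m (of_real r * e2pi (\<phi> - \<beta>)) - (-1) ^ m * polylog m (of_real r * e2pi (\<beta> - \<phi>)))
    * (polylog n (of_real r * e2pi (\<phi> - \<alpha>)) + (-1) ^ n * polylog n (of_real r * e2pi (\<alpha> - \<phi>)))"

lemma angular_integral_polylog:
  assumes r: "0 \<le> r" "r < 1"
  shows "continuous_on {0..1} (polylog_integrand m n \<alpha> \<beta> r)"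
    and "(\<lambda>k. of_real r ^ (2 * Suc k) * fourier_weight m n (\<alpha> - \<beta>) k) sums integral {0..1} (polylog_integrand m n \<alpha> \<beta> r)"
proof -
  define a1 where "a1 = polylog_fourier_coeff m r \<beta>"
  define a2 where "a2 j = - ((-1) ^ m) * polylog_fourier_coeff m r (- \<beta>) j" for j
  define b1 where "b1 = polylog_fourier_coeff n r \<alpha>"
  define b2 where "b2 j = (-1) ^ n * polylog_fourier_coeff n r (- \<alpha>) j" for j
  have "polylog m (of_real r * e2pi (\<phi> - \<beta>)) - (-1) ^ m * polylog m (of_real r * e2pi (\<beta> - \<phi>))
      = (\<Sum>j. sym_harmonic (a1 j) (a2 j) (Suc j) \<phi>)"
    "polylog n (of_real r * e2pi (\<phi> - \<alpha>)) + (-1) ^ n * polylog n (of_real r * e2pi (\<alpha> - \<phi>))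
      = (\<Sum>k. sym_harmonic (b1 k) (b2 k) (Suc k) \<phi>)" for \<phi>
    using sums_unique[OF sums_polylog_sym_harmonic[OF r, of m \<beta> "- ((-1) ^ m)" \<phi>]]
      sums_unique[OF sums_polylog_sym_harmonic[OF r, of n \<alpha> "(-1) ^ n" \<phi>]]
    unfolding a1_def a2_def b1_def b2_def by simp_all
  then have g: "polylog_integrand m n \<alpha> \<beta> r = (\<lambda>\<phi>. (\<Sum>j. sym_harmonic (a1 j) (a2 j) (Suc j) \<phi>)
      * (\<Sum>k. sym_harmonic (b1 k) (b2 k) (Suc k) \<phi>))"
    unfolding polylog_integrand_def[abs_def] by simp
  have M: "summable (\<lambda>j. 2 * r ^ Suc j)"
    using r by (simp add: summable_mult summable_geometric)
  have "norm (a1 j) + norm (a2 j) \<le> 2 * r ^ Suc j" "norm (b1 j) + norm (b2 j) \<le> 2 * r ^ Suc j" for j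
    unfolding a1_def a2_def b1_def b2_def
    using norm_polylog_fourier_coeff_le[OF r(1), of m \<beta> j] norm_polylog_fourier_coeff_le[OF r(1), of m "- \<beta>" j]
      norm_polylog_fourier_coeff_le[OF r(1), of n \<alpha> j] norm_polylog_fourier_coeff_le[OF r(1), of n "- \<alpha>" j]
    by (simp_all add: norm_mult norm_power)
  note series = sums_integral_sym_harmonic_series_mult[OF M this]
  show "continuous_on {0..1} (polylog_integrand m n \<alpha> \<beta> r)"
    unfolding g by (rule series(1))
  show "(\<lambda>k. of_real r ^ (2 * Suc k) * fourier_weight m n (\<alpha> - \<beta>) k) sums integral {0..1} (polylog_integrand m n \<alpha> \<beta> r)"
    using series(2) unfolding g a1_def a2_def b1_def b2_def polylog_fourier_coeff_product .
qed

lemma sums_polylog_sym_fourier_weight: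
  assumes h: "h \<in> \<int>" and t: "0 \<le> t" "t < 1"
  shows "(\<lambda>k. of_real (t ^ (2 * k + 2) / (2 * k + 2)) * fourier_weight m n \<theta> k)
    sums ((-1) ^ n / 2 * polylog_sym (m + n + 1) (t ^ 2) (\<theta> + h))"
proof -
  define N where "N = m + n + 1"
  have "0 \<le> t ^ 2" "t ^ 2 < 1"
    using t by (auto simp: abs_square_less_1)
  from sums_mult[OF sums_polylog_sym[OF this, of N "\<theta> + h"], of "(-1) ^ n / 2"]
  have *: "(\<lambda>j. (-1) ^ n / 2 * (of_real (t ^ 2) ^ Suc j / of_nat (Suc j) ^ N
      * (e2pi (real (Suc j) * (\<theta> + h)) + (-1) ^ N * e2pi (- real (Suc j) * (\<theta> + h)))))
      sums ((-1) ^ n / 2 * polylog_sym N (t ^ 2) (\<theta> + h))" .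
  have shift: "e2pi (c * (\<theta> + h)) = e2pi (c * \<theta>)" if "c \<in> \<int>" for c
    using that h by (metis Ints_cases Ints_mult distrib_left e2pi_periodic)
  have sign: "(-1) ^ N * ((-1) ^ n * x) = - ((-1) ^ m * x)" for x :: complex
    unfolding N_def by (simp add: power_add)
  have "(-1) ^ n / 2 * (of_real (t ^ 2) ^ Suc j / of_nat (Suc j) ^ N
      * (e2pi (real (Suc j) * (\<theta> + h)) + (-1) ^ N * e2pi (- real (Suc j) * (\<theta> + h))))
    = of_real (t ^ (2 * j + 2) / (2 * j + 2)) * fourier_weight m n \<theta> j" for j
  proof -
    define c where "c = (of_nat (Suc j) :: complex)"
    define T where "T = (of_real t :: complex) ^ (2 * Suc j)"
    have "c \<noteq> 0"
      by (simp add: c_def del: of_nat_Suc)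
    have tT: "of_real (t ^ 2) ^ Suc j = T"
      unfolding T_def by (simp only: of_real_power[symmetric] power_mult)
    have tc: "of_real (t ^ (2 * j + 2) / (2 * j + 2)) = T / (2 * c)"
      unfolding T_def c_def by (simp add: field_simps)
    have cN: "c ^ N = c ^ (m + n) * c"
      unfolding N_def by simp
    show ?thesis
      unfolding fourier_weight_def c_def[symmetric] tT tc cN
        shift[OF Ints_of_nat] shift[OF Ints_minus[OF Ints_of_nat]]
      using \<open>c \<noteq> 0\<close> by (simp add: field_simps sign)
  qed
  with * show ?thesis
    unfolding N_def by simp
qed

lemma radial_integral_polylog:
  fixes f :: "real \<Rightarrow> real \<Rightarrow> complex"
  assumes h: "h \<in> \<int>" and f: "\<And>r. 0 \<le> r \<Longrightarrow> r < 1 \<Longrightarrow> f r = polylog_integrand m n \<alpha> \<beta> r"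
    and t: "0 < t" "t < 1"
  shows "(\<lambda>r. integral {0..1} (f r) / of_real r) integrable_on {0..t}"
    and "integral {0..t} (\<lambda>r. integral {0..1} (f r) / of_real r)
      = (-1) ^ n / 2 * polylog_sym (m + n + 1) (t ^ 2) (\<alpha> - \<beta> + h)"
proof -
  have angular: "(\<lambda>k. of_real r ^ (2 * Suc k) * fourier_weight m n (\<alpha> - \<beta>) k) sums integral {0..1} (f r)"
    if "r \<in> {0..<1}" for r
    using that angular_integral_polylog[of r m n \<alpha> \<beta>] f[of r] by auto
  note radial = integral_odd_power_series[OF angular norm_fourier_weight_le t]
  show "(\<lambda>r. integral {0..1} (f r) / of_real r) integrable_on {0..t}"
    by (rule radial(1))
  show "integral {0..t} (\<lambda>r. integral {0..1} (f r) / of_real r)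
      = (-1) ^ n / 2 * polylog_sym (m + n + 1) (t ^ 2) (\<alpha> - \<beta> + h)"
    using sums_polylog_sym_fourier_weight[OF h, of t m n "\<alpha> - \<beta>"] t
    by (intro sums_unique2[OF radial(2)]) auto
qed

lemma double_integral_polylog:
  fixes m n :: nat and \<alpha> \<beta> h :: real and f :: "real \<Rightarrow> real \<Rightarrow> complex"
  assumes h: "h \<in> \<int>" "0 < \<alpha> - \<beta> + h" "\<alpha> - \<beta> + h < 1"
    and f: "\<And>r. 0 \<le> r \<Longrightarrow> r < 1 \<Longrightarrow> f r = polylog_integrand m n \<alpha> \<beta> r"
  shows "(\<forall>r\<in>{0..<1}. f r integrable_on {0..1})
    \<and> (\<forall>t\<in>{0<..<1}. (\<lambda>r. integral {0..1} (f r) / of_real r) integrable_on {0..t})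
    \<and> ((\<lambda>t. 2 / (2 * of_real pi * \<i>) ^ (m + n + 1)
            * integral {0..t} (\<lambda>r. integral {0..1} (f r) / of_real r))
        \<longlongrightarrow> - ((-1) ^ n / of_nat (fact (m + n + 1)))
             * of_real (bernpoly (m + n + 1) (\<alpha> - \<beta> + h))) (at_left 1)"
proof (intro conjI ballI)
  define N where "N = m + n + 1"
  define c where "c = 2 / (2 * of_real pi * \<i>) ^ N * (-1) ^ n / (2 :: complex)"
  show "f r integrable_on {0..1}" if "r \<in> {0..<1}" for r
    using that angular_integral_polylog(1)[of r m n \<alpha> \<beta>] f[of r] by (auto intro: integrable_continuous_real)
  show "(\<lambda>r. integral {0..1} (f r) / of_real r) integrable_on {0..t}" if "t \<in> {0<..<1}" for t
    using that radial_integral_polylog(1)[OF h(1) f] by auto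
  have "\<forall>\<^sub>F t in at_left 1. c * polylog_sym N (t ^ 2) (\<alpha> - \<beta> + h)
      = 2 / (2 * of_real pi * \<i>) ^ N * integral {0..t} (\<lambda>r. integral {0..1} (f r) / of_real r)"
    using eventually_at_left_real[OF zero_less_one]
    by (rule eventually_mono) (simp add: radial_integral_polylog(2)[OF h(1) f] c_def N_def)
  moreover have "((\<lambda>t. c * polylog_sym N (t ^ 2) (\<alpha> - \<beta> + h))
      \<longlongrightarrow> c * (bernoulli_fourier_factor N * of_real (bernpoly N (\<alpha> - \<beta> + h)))) (at_left 1)"
    using h by (intro tendsto_intros tendsto_polylog_sym_square) (auto simp: N_def)
  moreover have "c * bernoulli_fourier_factor N = - ((-1) ^ n / of_nat (fact N))"
    unfolding bernoulli_fourier_factor_def c_def by (simp add: field_simps)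
  ultimately show "((\<lambda>t. 2 / (2 * of_real pi * \<i>) ^ (m + n + 1)
            * integral {0..t} (\<lambda>r. integral {0..1} (f r) / of_real r))
        \<longlongrightarrow> - ((-1) ^ n / of_nat (fact (m + n + 1)))
             * of_real (bernpoly (m + n + 1) (\<alpha> - \<beta> + h))) (at_left 1)"
    unfolding N_def by (simp add: Lim_transform_eventually mult.assoc[symmetric])
qed

lemma polylog_integrand_exp_cnj:
  assumes "0 \<le> r" "r < 1"
  shows "polylog_integrand m n \<alpha> \<beta> r \<phi> =
    (polylog m (of_real r * exp (2 * of_real pi * \<i> * of_real \<phi>) * cnj (exp (2 * of_real pi * \<i> * of_real \<beta>)))
      - (-1) ^ m * cnj (polylog m (of_real r * exp (2 * of_real pi * \<i> * of_real \<phi>)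
          * cnj (exp (2 * of_real pi * \<i> * of_real \<beta>)))))
    * (polylog n (of_real r * exp (2 * of_real pi * \<i> * of_real \<phi>) * cnj (exp (2 * of_real pi * \<i> * of_real \<alpha>)))
      + (-1) ^ n * cnj (polylog n (of_real r * exp (2 * of_real pi * \<i> * of_real \<phi>)
          * cnj (exp (2 * of_real pi * \<i> * of_real \<alpha>)))))"
proof -
  have arg: "of_real r * exp (2 * of_real pi * \<i> * of_real \<phi>) * cnj (exp (2 * of_real pi * \<i> * of_real \<gamma>))
      = of_real r * e2pi (\<phi> - \<gamma>)" for \<gamma>
    unfolding e2pi_def[symmetric] by (simp add: cnj_e2pi e2pi_add[symmetric] mult.assoc)
  have "cnj (polylog k (of_real r * e2pi (\<phi> - \<gamma>))) = polylog k (of_real r * e2pi (\<gamma> - \<phi>))" for k \<gamma>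
    using assms by (simp add: polylog_cnj norm_mult cnj_e2pi)
  then show ?thesis
    unfolding polylog_integrand_def arg by simp
qed

theorem lemma5p1:
  fixes m n :: nat and \<alpha> \<beta> :: real and U V :: complex
  assumes "0 \<le> \<alpha>" "\<alpha> < 1" "0 \<le> \<beta>" "\<beta> < 1" "\<alpha> \<noteq> \<beta>"
    and "U = exp (2 * of_real pi * \<i> * of_real \<alpha>)"
    and "V = exp (2 * of_real pi * \<i> * of_real \<beta>)"
  defines "f \<equiv> (\<lambda>r \<phi>::real.
      (polylog m (of_real r * exp (2 * of_real pi * \<i> * of_real \<phi>) * cnj V)
        - (-1) ^ m * cnj (polylog m (of_real r * exp (2 * of_real pi * \<i> * of_real \<phi>) * cnj V)))
    * (polylog n (of_real r * exp (2 * of_real pi * \<i> * of_real \<phi>) * cnj U)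
        + (-1) ^ n * cnj (polylog n (of_real r * exp (2 * of_real pi * \<i> * of_real \<phi>) * cnj U))))"
  shows "(\<forall>r\<in>{0..<1}. f r integrable_on {0..1})
    \<and> (\<forall>t\<in>{0<..<1}. (\<lambda>r. integral {0..1} (f r) / of_real r) integrable_on {0..t})
    \<and> ((\<lambda>t. 2 / (2 * of_real pi * \<i>) ^ (m + n + 1)
            * integral {0..t} (\<lambda>r. integral {0..1} (f r) / of_real r))
        \<longlongrightarrow> - ((-1) ^ n / of_nat (fact (m + n + 1)))
             * of_real (bernpoly (m + n + 1) (\<alpha> - \<beta> + heaviside (\<beta> - \<alpha>)))) (at_left 1)"
proof (rule double_integral_polylog)
  show "heaviside (\<beta> - \<alpha>) \<in> \<int>"
    by (simp add: heaviside_def)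
  show "0 < \<alpha> - \<beta> + heaviside (\<beta> - \<alpha>)" "\<alpha> - \<beta> + heaviside (\<beta> - \<alpha>) < 1"
    using assms(1-5) by (auto simp: heaviside_def)
  show "f r = polylog_integrand m n \<alpha> \<beta> r" if "0 \<le> r" "r < 1" for r
    unfolding f_def assms(6,7) using polylog_integrand_exp_cnj[OF that] by (intro ext) simp
qed

end
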